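(* Consider $n\ge 2$ agents in $\mathbb{R}^d$ ($d\ge 2$) with undirected graph $\mathcal{G}=(\mathcal{V},\mathcal{E})$, desired bearings $\{g_{ij}^*\}_{(i,j)\in\mathcal{E}}$, leaders $\mathcal{V}_\ell=\{1,\dots,n_\ell\}$ and followers $\mathcal{V}_f=\{n_\ell+1,\dots,n\}$ (with $n_f=n-n_\ell$), and suppose the standing assumption below holds. Let $\mathcal{L}_{ff}$ be the follower–follower block of the bearing Laplacian. Then for all $k_P>0$ and $k_I>0$ the matrix $$A=\begin{bmatrix}-k_P\mathcal{L}_{ff} & -k_I I_{dn_f}\\ \mathcal{L}_{ff} & 0\end{bmatrix}\in\mathbb{R}^{2dn_f\times 2dn_f}$$ is Hurwitz (all its eigenvalues have negative real part).
   Context: For nonzero $x\in\mathbb{R}^d$, $P_x=I_d-\frac{xx^T}{\|x\|^2}$. The bearing Laplacian $\mathcal{L}\in\mathbb{R}^{dn\times dn}$ has $(i,j)$-th $d\times d$ block $0$ if $i\ne j,(i,j)\notin\mathcal{E}$; $-P_{g_{ij}^*}$ if $i\ne j,(i,j)\in\mathcal{E}$; $\sum_{k\in\mathcal{N}_i}P_{g_{ik}^*}$ if $i=j$ (where $\mathcal{N}_i$ is the neighbor set of $i$). $\mathcal{L}_{ff}$ is its lower-right $dn_f\times dn_f$ block (rows and columns of followers). Infinitesimal bearing rigidity: for $p=[p_1^T,\dots,p_n^T]^T$ with no two $p_i$ coinciding, orient each edge of $\mathcal{G}$, let $g_k=(p_j-p_i)/\|p_j-p_i\|$ for the $k$-th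 oriented edge $(i,j)$, $F_B(p)=[g_1^T,\dots,g_m^T]^T$, and $R_B(p)=\partial F_B/\partial p\in\mathbb{R}^{dm\times dn}$; the formation $\mathcal{G}(p)$ is infinitesimally bearing rigid if $\mathrm{Null}(R_B(p))=\mathrm{span}\{\mathbf{1}_n\otimes I_d,\,p\}$ (i.e. all infinitesimal bearing motions are translations and scalings). Standing assumption: there is a configuration $p^*$ with $(p_j^*-p_i^* )/\|p_j^*-p_i^*\|=g_{ij}^*$ for all $(i,j)\in\mathcal{E}$ (the target formation, whose leader positions coincide with the actual leader positions), this formation $\mathcal{G}(p^* )$ is infinitesimally bearing rigid, and there are at least two leaders ($n_\ell\ge2$). Under this assumption $\mathcal{L}_{ff}$ is symmetric positive definite. *)

theory Defs
  imports Complex_Main "Jordan_Normal_Form.Char_Poly"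
begin

text \<open>Conventions: agents are indexed 0..n-1, coordinates 0..d-1. A configuration is
  p :: nat => nat => real with p i c the c-th coordinate of agent i.
  Leaders are agents 0..nl-1, followers nl..n-1. The stacked vector index of
  (agent i, coordinate c) is i*d + c.\<close>

definition sqnorm :: "nat \<Rightarrow> (nat \<Rightarrow> real) \<Rightarrow> real" where
  "sqnorm d x = (\<Sum>c<d. (x c)^2)"

definition proj :: "nat \<Rightarrow> (nat \<Rightarrow> real) \<Rightarrow> nat \<Rightarrow> nat \<Rightarrow> real" where
  "proj d x a b = (if a = b then 1 else 0) - x a * x b / sqnorm d x"

definition bearing :: "nat \<Rightarrow> (nat \<Rightarrow> nat \<Rightarrow> real) \<Rightarrow> nat \<Rightarrow> nat \<Rightarrow> nat \<Rightarrow> real" where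
  "bearing d p i j c = (p j c - p i c) / sqrt (sqnorm d (\<lambda>a. p j a - p i a))"

definition undirected_graph :: "nat \<Rightarrow> (nat \<times> nat) set \<Rightarrow> bool" where
  "undirected_graph n E \<longleftrightarrow> E \<subseteq> {0..<n} \<times> {0..<n} \<and> (\<forall>i j. (i,j) \<in> E \<longrightarrow> (j,i) \<in> E)
     \<and> (\<forall>i. (i,i) \<notin> E)"

definition no_coinciding :: "nat \<Rightarrow> nat \<Rightarrow> (nat \<Rightarrow> nat \<Rightarrow> real) \<Rightarrow> bool" where
  "no_coinciding n d p \<longleftrightarrow> (\<forall>i<n. \<forall>j<n. i \<noteq> j \<longrightarrow> (\<exists>c<d. p i c \<noteq> p j c))"

text \<open>Infinitesimal bearing rigidity: Null(R_B(p)) = span{1 (x) I_d, p}.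
  A perturbation v lies in Null(R_B(p)) iff R_B(p) v = 0, i.e. iff the directional
  derivative at t = 0 of every bearing component along p + t v vanishes (chain rule).
  Both orientations of every edge are included; this does not change the null space
  since g_ji = - g_ij.\<close>
definition inf_bearing_rigid :: "nat \<Rightarrow> nat \<Rightarrow> (nat \<times> nat) set \<Rightarrow> (nat \<Rightarrow> nat \<Rightarrow> real) \<Rightarrow> bool" where
  "inf_bearing_rigid n d E p \<longleftrightarrow>
     (\<forall>v :: nat \<Rightarrow> nat \<Rightarrow> real.
        (\<forall>(i,j)\<in>E. \<forall>c<d.
            ((\<lambda>t. bearing d (\<lambda>k a. p k a + t * v k a) i j c) has_real_derivative 0) (at 0))
        \<longleftrightarrow> (\<exists>(a :: nat \<Rightarrow> real) (s :: real). \<forall>i<n. \<forall>c<d. v i c = a c + s * p i c))"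

definition bearing_laplacian ::
  "nat \<Rightarrow> nat \<Rightarrow> (nat \<times> nat) set \<Rightarrow> (nat \<Rightarrow> nat \<Rightarrow> nat \<Rightarrow> real) \<Rightarrow> real mat" where
  "bearing_laplacian n d E g = mat (d*n) (d*n) (\<lambda>(r,s).
     let i = r div d; a = r mod d; j = s div d; b = s mod d in
     if i = j then (\<Sum>k\<in>{k. (i,k) \<in> E}. proj d (g i k) a b)
     else if (i,j) \<in> E then - proj d (g i j) a b else 0)"

definition L_ff :: "nat \<Rightarrow> nat \<Rightarrow> nat \<Rightarrow> (nat \<times> nat) set \<Rightarrow> (nat \<Rightarrow> nat \<Rightarrow> nat \<Rightarrow> real) \<Rightarrow> real mat" where
  "L_ff n nl d E g = mat (d*(n-nl)) (d*(n-nl))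
     (\<lambda>(r,s). bearing_laplacian n d E g $$ (r + d*nl, s + d*nl))"

definition hurwitz :: "real mat \<Rightarrow> bool" where
  "hurwitz A \<longleftrightarrow> (\<forall>z. eigenvalue (map_mat complex_of_real A) z \<longrightarrow> Re z < 0)"

end

theory Submission
  imports Defs
begin

(*
  Positive definiteness of L_ff: its quadratic form at a follower displacement u, with the
  leaders padded by zeros to an agent displacement z, equals half the sum over edges (i,k) of
  |P_{g_ik} (z_i - z_k)|^2. If it vanishes, every edge displacement is parallel to its bearing,
  so z is an infinitesimal bearing motion, hence by rigidity a translation plus a scaling;
  vanishing at two leaders in distinct positions, it is zero.

  Hurwitz property: an eigenvector (x, y) of A for the eigenvalue z satisfies
  -kP L x - kI y = z x and L x = z y. Pairing the first equation with x^H and substituting the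
  second shows that z is a root of r z^2 + kP q z + kI q with q = x^H L x > 0 and r = x^H x > 0,
  and all roots of such a quadratic lie in the open left half-plane.
*)

lemma quadratic_form_sum:
  fixes A :: "'a :: comm_semiring_0 mat"
  assumes "A \<in> carrier_mat m m" and "v \<in> carrier_vec m" and "w \<in> carrier_vec m"
  shows "v \<bullet> (A *\<^sub>v w) = (\<Sum>r<m. \<Sum>s<m. v $ r * A $$ (r, s) * w $ s)"
  using assms by (simp add: scalar_prod_def sum_distrib_left mult.assoc atLeast0LessThan)

lemma sqnorm_cong: "(\<And>c. c < d \<Longrightarrow> x c = y c) \<Longrightarrow> sqnorm d x = sqnorm d y"
  unfolding sqnorm_def by (intro sum.cong) auto

lemma sqnorm_pos_iff: "sqnorm d x > 0 \<longleftrightarrow> (\<exists>c<d. x c \<noteq> 0)"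
  unfolding sqnorm_def by (auto simp: sum_nonneg_eq_0_iff less_le sum_nonneg)

lemma proj_symmetric: "proj d x a b = proj d x b a"
  unfolding proj_def by (simp add: mult.commute)

lemma proj_uminus_cong:
  assumes "\<And>c. c < d \<Longrightarrow> y c = - x c" and "a < d" and "b < d"
  shows "proj d y a b = proj d x a b"
proof -
  have "sqnorm d y = sqnorm d x" unfolding sqnorm_def using assms(1) by (intro sum.cong) auto
  then show ?thesis unfolding proj_def using assms by simp
qed

lemma proj_quadratic_form:
  assumes "sqnorm d x > 0"
  shows "(\<Sum>a<d. \<Sum>b<d. w a * proj d x a b * w b)
       = (\<Sum>a<d. (w a - ((\<Sum>c<d. x c * w c) / sqnorm d x) * x a)\<^sup>2)"
proof -
  define S where "S = sqnorm d x"
  define t where "t = (\<Sum>c<d. x c * w c)"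
  have "(\<Sum>a<d. \<Sum>b<d. w a * proj d x a b * w b)
      = (\<Sum>a<d. \<Sum>b<d. (if a = b then w a * w b else 0) - (x a * w a) * (x b * w b) / S)"
    unfolding proj_def S_def by (intro sum.cong refl) (auto simp: algebra_simps)
  also have "\<dots> = (\<Sum>a<d. \<Sum>b<d. if a = b then w a * w b else 0)
      - (\<Sum>a<d. \<Sum>b<d. (x a * w a) * (x b * w b)) / S"
    by (simp add: sum_subtractf sum_divide_distrib)
  also have "\<dots> = (\<Sum>a<d. (w a)\<^sup>2) - t * t / S"
    by (simp add: t_def sum_product power2_eq_square)
  finally have lhs: "(\<Sum>a<d. \<Sum>b<d. w a * proj d x a b * w b) = (\<Sum>a<d. (w a)\<^sup>2) - t * t / S" .
  have "(\<Sum>a<d. (w a - (t / S) * x a)\<^sup>2)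
      = (\<Sum>a<d. (w a)\<^sup>2 - 2 * (t / S) * (x a * w a) + (t / S)\<^sup>2 * (x a)\<^sup>2)"
    by (intro sum.cong refl) (simp add: power2_eq_square algebra_simps)
  also have "\<dots> = (\<Sum>a<d. (w a)\<^sup>2) - 2 * (t / S) * t + (t / S)\<^sup>2 * S"
    unfolding t_def S_def sqnorm_def by (simp add: sum.distrib sum_subtractf sum_distrib_left)
  also have "\<dots> = (\<Sum>a<d. (w a)\<^sup>2) - t * t / S"
    using assms by (simp add: S_def power2_eq_square field_simps)
  finally show ?thesis using lhs by (simp add: S_def t_def)
qed

lemma proj_quadratic_form_nonneg:
  assumes "sqnorm d x > 0"
  shows "(\<Sum>a<d. \<Sum>b<d. w a * proj d x a b * w b) \<ge> 0"
  unfolding proj_quadratic_form[OF assms] by (simp add: sum_nonneg)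

lemma proj_quadratic_form_eq_0_imp_parallel:
  assumes "sqnorm d x > 0" and "(\<Sum>a<d. \<Sum>b<d. w a * proj d x a b * w b) = 0"
  obtains t where "\<And>c. c < d \<Longrightarrow> w c = t * x c"
proof
  let ?t = "(\<Sum>c<d. x c * w c) / sqnorm d x"
  fix c assume "c < d"
  moreover have "(\<Sum>a<d. (w a - ?t * x a)\<^sup>2) = 0"
    using assms(2) unfolding proj_quadratic_form[OF assms(1)] .
  ultimately have "(w c - ?t * x c)\<^sup>2 = 0"
    by (simp add: sum_nonneg_eq_0_iff)
  then show "w c = ?t * x c" by simp
qed

lemma bearing_swap: "bearing d p j i c = - bearing d p i j c"
proof -
  have "sqnorm d (\<lambda>a. p i a - p j a) = sqnorm d (\<lambda>a. p j a - p i a)"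
    unfolding sqnorm_def by (intro sum.cong refl) (simp add: power2_commute)
  then show ?thesis unfolding bearing_def by (simp add: minus_divide_left)
qed

lemma sqnorm_bearing:
  assumes "sqnorm d (\<lambda>a. p j a - p i a) > 0"
  shows "sqnorm d (bearing d p i j) = 1"
  using assms unfolding sqnorm_def[of d "bearing d p i j"] bearing_def
  by (simp add: power_divide sum_divide_distrib[symmetric] sqnorm_def[symmetric])

lemma edge_bearings_antisymmetric:
  assumes G: "undirected_graph n E"
    and gE: "\<And>i j c. (i, j) \<in> E \<Longrightarrow> c < d \<Longrightarrow> g i j c = bearing d p i j c"
    and ij: "(i, j) \<in> E" and c: "c < d"
  shows "g j i c = - g i j c"
proof -
  have "(j, i) \<in> E" using G ij unfolding undirected_graph_def by blast
  then have "g j i c = bearing d p j i c" by (rule gE[OF _ c])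
  also have "\<dots> = - bearing d p i j c" by (rule bearing_swap)
  finally show ?thesis using gE[OF ij c] by simp
qed

lemma bearing_has_derivative_zero_if_parallel:
  assumes sep: "sqnorm d (\<lambda>a. p j a - p i a) > 0" and c: "c < d"
    and par: "\<And>c. c < d \<Longrightarrow> v j c - v i c = s * (p j c - p i c)"
  shows "((\<lambda>t. bearing d (\<lambda>k a. p k a + t * v k a) i j c) has_real_derivative 0) (at 0)"
proof -
  define e where "e a = p j a - p i a" for a
  have const: "bearing d (\<lambda>k a. p k a + t * v k a) i j c = e c / sqrt (sqnorm d e)"
    if t: "1 + t * s > 0" for t
  proof -
    have diff: "p j a + t * v j a - (p i a + t * v i a) = (1 + t * s) * e a" if "a < d" for a
    proof -
      have vj: "v j a = v i a + s * (p j a - p i a)" using par[OF that] by linarith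
      show ?thesis unfolding vj e_def by (simp add: algebra_simps)
    qed
    have "sqnorm d (\<lambda>a. p j a + t * v j a - (p i a + t * v i a)) = (1 + t * s)\<^sup>2 * sqnorm d e"
      using sqnorm_cong[OF diff] unfolding sqnorm_def by (simp add: sum_distrib_left power_mult_distrib)
    then show ?thesis
      unfolding bearing_def diff[OF c] using t by (simp add: real_sqrt_mult)
  qed
  \<comment> \<open>Along the perturbation the edge vector is only rescaled, by the factor 1 + t s > 0 near t = 0.\<close>
  have "((\<lambda>t::real. 1 + t * s) \<longlongrightarrow> 1 + 0 * s) (nhds 0)"
    by (intro tendsto_intros filterlim_ident)
  then have "eventually (\<lambda>t::real. 1 + t * s > 0) (nhds 0)"
    by (rule order_tendstoD) simp
  then have "eventually (\<lambda>t. bearing d (\<lambda>k a. p k a + t * v k a) i j c = e c / sqrt (sqnorm d e)) (nhds 0)"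
    by eventually_elim (rule const)
  then show ?thesis
    by (rule DERIV_cong_ev[THEN iffD2, OF refl _ refl]) (rule DERIV_const)
qed

lemma inf_bearing_rigid_parallel_displacement:
  assumes rigid: "inf_bearing_rigid n d E p"
    and sep: "\<And>i j. (i, j) \<in> E \<Longrightarrow> sqnorm d (\<lambda>a. p j a - p i a) > 0"
    and par: "\<And>i j. (i, j) \<in> E \<Longrightarrow> \<exists>s. \<forall>c<d. v j c - v i c = s * (p j c - p i c)"
  shows "\<exists>a s. \<forall>i<n. \<forall>c<d. v i c = a c + s * p i c"
proof -
  have "((\<lambda>t. bearing d (\<lambda>k a. p k a + t * v k a) i j c) has_real_derivative 0) (at 0)"
    if ij: "(i, j) \<in> E" and c: "c < d" for i j c
  proof -
    from par[OF ij] obtain s where "\<forall>c<d. v j c - v i c = s * (p j c - p i c)" ..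
    then show ?thesis
      using bearing_has_derivative_zero_if_parallel[OF sep[OF ij] c, of v s] by blast
  qed
  then show ?thesis
    using rigid[unfolded inf_bearing_rigid_def, rule_format, of v] by blast
qed

lemma translation_scaling_fixing_two_agents:
  assumes nc: "no_coinciding n d p" and "i0 < n" "i1 < n" "i0 \<noteq> i1"
    and fix0: "\<And>c. c < d \<Longrightarrow> a c + s * p i0 c = 0"
    and fix1: "\<And>c. c < d \<Longrightarrow> a c + s * p i1 c = 0"
  shows "s = 0" and "\<And>c. c < d \<Longrightarrow> a c = 0"
proof -
  obtain c' where c': "c' < d" "p i0 c' \<noteq> p i1 c'"
    using nc assms(2-4) unfolding no_coinciding_def by (metis linorder_neqE_nat)
  have "s * (p i0 c' - p i1 c') = 0"
    unfolding right_diff_distrib using fix0[OF c'(1)] fix1[OF c'(1)] by linarith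
  with c'(2) show "s = 0" by simp
  with fix0 show "a c = 0" if "c < d" for c using that by simp
qed

lemma edge_sqnorm_pos:
  assumes "undirected_graph n E" and "no_coinciding n d p" and "(i, k) \<in> E"
  shows "sqnorm d (\<lambda>a. p k a - p i a) > 0"
proof -
  have "i < n" "k < n" "i \<noteq> k" using assms(1,3) unfolding undirected_graph_def by auto
  then obtain c where "c < d" "p i c \<noteq> p k c" using assms(2) unfolding no_coinciding_def by blast
  then show ?thesis unfolding sqnorm_pos_iff by auto
qed

lemma sqnorm_edge_bearing:
  assumes G: "undirected_graph n E" and nc: "no_coinciding n d p"
    and gE: "\<And>i j c. (i, j) \<in> E \<Longrightarrow> c < d \<Longrightarrow> g i j c = bearing d p i j c"
    and ik: "(i, k) \<in> E"
  shows "sqnorm d (g i k) = 1"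
  using sqnorm_bearing[OF edge_sqnorm_pos[OF G nc ik]] sqnorm_cong[of d "g i k"] gE[OF ik] by simp

lemma zero_edge_energy_imp_zero:
  fixes p z :: "nat \<Rightarrow> nat \<Rightarrow> real"
  assumes G: "undirected_graph n E" and nc: "no_coinciding n d p"
    and gE: "\<And>i j c. (i, j) \<in> E \<Longrightarrow> c < d \<Longrightarrow> g i j c = bearing d p i j c"
    and rigid: "inf_bearing_rigid n d E p" and nl: "2 \<le> nl" "nl \<le> n"
    and energy: "\<And>i k. (i, k) \<in> E \<Longrightarrow>
      (\<Sum>a<d. \<Sum>b<d. (z i a - z k a) * proj d (g i k) a b * (z i b - z k b)) = 0"
    and leaders: "\<And>i c. i < nl \<Longrightarrow> z i c = 0"
    and "i < n" and "c < d"
  shows "z i c = 0"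
proof -
  have par: "\<exists>s. \<forall>c<d. z k c - z i c = s * (p k c - p i c)" if edge: "(i, k) \<in> E" for i k
  proof -
    have "sqnorm d (g i k) > 0" using sqnorm_edge_bearing[OF G nc gE edge] by simp
    then obtain t where t: "\<And>c. c < d \<Longrightarrow> z i c - z k c = t * g i k c"
      using proj_quadratic_form_eq_0_imp_parallel[OF _ energy[OF edge]] by blast
    have "z k c - z i c = (- t / sqrt (sqnorm d (\<lambda>a. p k a - p i a))) * (p k c - p i c)"
      if "c < d" for c
      using t[OF that] unfolding gE[OF edge that] bearing_def by simp
    then show ?thesis by blast
  qed
  obtain a s where affine: "\<And>i c. i < n \<Longrightarrow> c < d \<Longrightarrow> z i c = a c + s * p i c"
    using inf_bearing_rigid_parallel_displacement[OF rigid edge_sqnorm_pos[OF G nc] par] by blast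
  have n01: "0 < n" "1 < n" using nl by auto
  have "z 0 c = 0" "z 1 c = 0" for c using leaders nl by auto
  then have fix0: "a c + s * p 0 c = 0" and fix1: "a c + s * p 1 c = 0" if "c < d" for c
    using affine[OF n01(1) that] affine[OF n01(2) that] by simp_all
  show ?thesis
    using affine[OF \<open>i < n\<close> \<open>c < d\<close>] translation_scaling_fixing_two_agents[OF nc n01 zero_neq_one fix0 fix1]
      \<open>c < d\<close> by simp
qed

lemma sum_lessThan_mult_blocks:
  "(\<Sum>r<N * d. f r) = (\<Sum>i<N. \<Sum>a<d. f (i * d + a :: nat))"
proof -
  have "(\<Sum>r\<in>{i * d..<i * d + d}. f r) = (\<Sum>a<d. f (i * d + a))" for i
    using sum.shift_bounds_nat_ivl[of f 0 "i * d" d] by (simp add: atLeast0LessThan add.commute)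
  then show ?thesis by (simp flip: sum.nat_group)
qed

lemma sum_lessThan_drop_zeros:
  fixes f :: "nat \<Rightarrow> 'a :: comm_monoid_add"
  assumes "\<And>i. i < l \<Longrightarrow> f i = 0" and "l \<le> n"
  shows "(\<Sum>i<n. f i) = (\<Sum>i<n - l. f (i + l))"
proof -
  have "(\<Sum>i<n. f i) = (\<Sum>i\<in>{0..<l}. f i) + (\<Sum>i\<in>{l..<n}. f i)"
    using assms(2) by (simp add: atLeast0LessThan[symmetric] sum.atLeastLessThan_concat)
  also have "\<dots> = (\<Sum>i<n - l. f (i + l))"
    using assms sum.shift_bounds_nat_ivl[of f 0 l "n - l"] by (simp add: atLeast0LessThan)
  finally show ?thesis .
qed

definition laplacian_block ::
  "nat \<Rightarrow> (nat \<times> nat) set \<Rightarrow> (nat \<Rightarrow> nat \<Rightarrow> nat \<Rightarrow> real) \<Rightarrow> nat \<Rightarrow> nat \<Rightarrow> nat \<Rightarrow> nat \<Rightarrow> real" where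
  "laplacian_block d E g i j a b =
     (if i = j then (\<Sum>k\<in>{k. (i, k) \<in> E}. proj d (g i k) a b)
      else if (i, j) \<in> E then - proj d (g i j) a b else 0)"

lemma L_ff_carrier: "L_ff n nl d E g \<in> carrier_mat (d * (n - nl)) (d * (n - nl))"
  unfolding L_ff_def by simp

lemma L_ff_index:
  assumes "0 < d" and "r < d * (n - nl)" and "s < d * (n - nl)" and "nl \<le> n"
  shows "L_ff n nl d E g $$ (r, s)
       = laplacian_block d E g (r div d + nl) (s div d + nl) (r mod d) (s mod d)"
proof -
  have "d * (n - nl) + d * nl = d * n" using assms(4) by (simp flip: add_mult_distrib2)
  then have "r + d * nl < d * n" "s + d * nl < d * n" using assms by linarith+
  moreover have "(r + d * nl) div d = r div d + nl" "(r + d * nl) mod d = r mod d"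
    "(s + d * nl) div d = s div d + nl" "(s + d * nl) mod d = s mod d"
    using assms(1) by (simp_all add: mult.commute)
  ultimately show ?thesis
    using assms(2,3) unfolding L_ff_def bearing_laplacian_def laplacian_block_def
    by (simp only: index_mat split Let_def)
qed

lemma laplacian_block_symmetric:
  assumes sym: "\<And>i j. (i, j) \<in> E \<Longrightarrow> (j, i) \<in> E"
    and anti: "\<And>i j c. (i, j) \<in> E \<Longrightarrow> c < d \<Longrightarrow> g j i c = - g i j c"
    and "a < d" and "b < d"
  shows "laplacian_block d E g i j a b = laplacian_block d E g j i b a"
proof (cases "(i, j) \<in> E")
  case True
  have "proj d (g j i) b a = proj d (g i j) b a"
    using proj_uminus_cong[OF anti[OF True] assms(4,3)] .
  then show ?thesis
    unfolding laplacian_block_def using True sym[OF True] by (simp add: proj_symmetric)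
next
  case False
  then have "(j, i) \<notin> E" using sym by blast
  with False show ?thesis
    unfolding laplacian_block_def by (simp add: proj_symmetric)
qed

lemma L_ff_symmetric:
  assumes "0 < d" and "nl \<le> n"
    and "\<And>i j. (i, j) \<in> E \<Longrightarrow> (j, i) \<in> E"
    and "\<And>i j c. (i, j) \<in> E \<Longrightarrow> c < d \<Longrightarrow> g j i c = - g i j c"
  shows "transpose_mat (L_ff n nl d E g) = L_ff n nl d E g"
proof (rule eq_matI)
  fix r s assume "r < dim_row (L_ff n nl d E g)" and "s < dim_col (L_ff n nl d E g)"
  then have rs: "r < d * (n - nl)" "s < d * (n - nl)" using carrier_matD[OF L_ff_carrier] by simp_all
  then have "transpose_mat (L_ff n nl d E g) $$ (r, s) = L_ff n nl d E g $$ (s, r)"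
    using carrier_matD[OF L_ff_carrier] by simp
  also have "\<dots> = L_ff n nl d E g $$ (r, s)"
    using rs assms(1) by (simp add: L_ff_index[OF assms(1) _ _ assms(2)] laplacian_block_symmetric[OF assms(3,4)])
  finally show "transpose_mat (L_ff n nl d E g) $$ (r, s) = L_ff n nl d E g $$ (r, s)" .
qed (simp_all add: L_ff_def)

lemma laplacian_row_sum:
  assumes G: "undirected_graph n E" and i: "i < n"
  shows "(\<Sum>j<n. laplacian_block d E g i j a b * z j b)
       = (\<Sum>k\<in>{k. (i, k) \<in> E}. proj d (g i k) a b * (z i b - z k b))"
proof -
  let ?N = "{k. (i, k) \<in> E}"
  have N: "?N \<subseteq> {..<n} - {i}"
    using G unfolding undirected_graph_def by auto
  have "(\<Sum>j<n. laplacian_block d E g i j a b * z j b)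
      = laplacian_block d E g i i a b * z i b + (\<Sum>j\<in>{..<n} - {i}. laplacian_block d E g i j a b * z j b)"
    using i by (simp add: sum.remove)
  also have "(\<Sum>j\<in>{..<n} - {i}. laplacian_block d E g i j a b * z j b)
      = (\<Sum>j\<in>{..<n} - {i}. if j \<in> ?N then - (proj d (g i j) a b * z j b) else 0)"
    by (intro sum.cong refl) (auto simp: laplacian_block_def)
  also have "\<dots> = (\<Sum>j\<in>?N. - (proj d (g i j) a b * z j b))"
    by (simp only: sum.inter_restrict[symmetric] finite_Diff finite_lessThan Int_absorb1[OF N])
  finally show ?thesis
    by (simp add: laplacian_block_def sum_distrib_right sum_subtractf right_diff_distrib sum_negf)
qed

lemma laplacian_quadratic_form_edge_sum:
  assumes G: "undirected_graph n E"
  shows "(\<Sum>i<n. \<Sum>a<d. \<Sum>j<n. \<Sum>b<d. z i a * laplacian_block d E g i j a b * z j b)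
       = (\<Sum>(i, k)\<in>E. \<Sum>a<d. \<Sum>b<d. z i a * proj d (g i k) a b * (z i b - z k b))"
proof -
  define F where "F i k = (\<Sum>a<d. \<Sum>b<d. z i a * proj d (g i k) a b * (z i b - z k b))" for i k
  have E: "E \<subseteq> {..<n} \<times> {..<n}"
    using G unfolding undirected_graph_def by auto
  have row: "(\<Sum>a<d. \<Sum>j<n. \<Sum>b<d. z i a * laplacian_block d E g i j a b * z j b)
      = (\<Sum>k\<in>{k. (i, k) \<in> E}. F i k)" if "i < n" for i
  proof -
    have "(\<Sum>a<d. \<Sum>j<n. \<Sum>b<d. z i a * laplacian_block d E g i j a b * z j b)
        = (\<Sum>a<d. \<Sum>b<d. z i a * (\<Sum>j<n. laplacian_block d E g i j a b * z j b))"
      by (simp add: sum_distrib_left mult.assoc sum.swap[of _ "{..<n}"])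
    also have "\<dots> = (\<Sum>a<d. \<Sum>b<d. \<Sum>k\<in>{k. (i, k) \<in> E}. z i a * proj d (g i k) a b * (z i b - z k b))"
      by (simp add: laplacian_row_sum[OF G that] sum_distrib_left mult.assoc)
    finally show ?thesis
      unfolding F_def by (simp add: sum.swap[of _ "{k. (i, k) \<in> E}"])
  qed
  have "Sigma {..<n} (\<lambda>i. {k. (i, k) \<in> E}) = E" using E by auto
  moreover have "finite {k. (i, k) \<in> E}" for i
    using E by (auto intro: finite_subset[of _ "{..<n}"])
  ultimately have "(\<Sum>i<n. \<Sum>k\<in>{k. (i, k) \<in> E}. F i k) = (\<Sum>(i, k)\<in>E. F i k)"
    using sum.Sigma[of "{..<n}" "\<lambda>i. {k. (i, k) \<in> E}" F] by simp
  with row show ?thesis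
    unfolding F_def by simp
qed

lemma sum_symmetric_relation_swap:
  assumes "\<And>i j. (i, j) \<in> E \<Longrightarrow> (j, i) \<in> E"
  shows "(\<Sum>(i, k)\<in>E. f i k) = (\<Sum>(i, k)\<in>E. f k i)"
  by (rule sum.reindex_bij_witness[where i="\<lambda>(i, k). (k, i)" and j="\<lambda>(i, k). (k, i)"])
     (auto intro: assms)

lemma laplacian_quadratic_form:
  assumes G: "undirected_graph n E"
    and anti: "\<And>i j c. (i, j) \<in> E \<Longrightarrow> c < d \<Longrightarrow> g j i c = - g i j c"
  shows "2 * (\<Sum>i<n. \<Sum>a<d. \<Sum>j<n. \<Sum>b<d. z i a * laplacian_block d E g i j a b * z j b)
       = (\<Sum>(i, k)\<in>E. \<Sum>a<d. \<Sum>b<d. (z i a - z k a) * proj d (g i k) a b * (z i b - z k b))"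
proof -
  define Q where "Q i k = (\<Sum>a<d. \<Sum>b<d. z i a * proj d (g i k) a b * (z i b - z k b))" for i k
  have sym: "\<And>i j. (i, j) \<in> E \<Longrightarrow> (j, i) \<in> E"
    using G unfolding undirected_graph_def by auto
  have pair: "Q i k + Q k i = (\<Sum>a<d. \<Sum>b<d. (z i a - z k a) * proj d (g i k) a b * (z i b - z k b))"
    if "(i, k) \<in> E" for i k
  proof -
    have "proj d (g k i) a b = proj d (g i k) a b" if "a < d" "b < d" for a b
      using proj_uminus_cong[OF anti[OF \<open>(i, k) \<in> E\<close>] that] .
    then have "Q k i = (\<Sum>a<d. \<Sum>b<d. z k a * proj d (g i k) a b * (z k b - z i b))"
      unfolding Q_def by (intro sum.cong refl) simp
    then show ?thesis
      unfolding Q_def by (simp add: sum.distrib[symmetric] algebra_simps)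
  qed
  have "(\<Sum>(i, k)\<in>E. Q k i) = (\<Sum>(i, k)\<in>E. Q i k)"
    by (rule sum_symmetric_relation_swap[OF sym, symmetric])
  then have "2 * (\<Sum>(i, k)\<in>E. Q i k) = (\<Sum>(i, k)\<in>E. Q i k) + (\<Sum>(i, k)\<in>E. Q k i)"
    by simp
  also have "\<dots> = (\<Sum>(i, k)\<in>E. Q i k + Q k i)"
    by (simp add: sum.distrib split_def)
  also have "\<dots> = (\<Sum>(i, k)\<in>E. \<Sum>a<d. \<Sum>b<d. (z i a - z k a) * proj d (g i k) a b * (z i b - z k b))"
    by (intro sum.cong refl) (auto simp: pair)
  finally show ?thesis
    unfolding laplacian_quadratic_form_edge_sum[OF G] Q_def .
qed

definition pad_leaders :: "nat \<Rightarrow> nat \<Rightarrow> real vec \<Rightarrow> nat \<Rightarrow> nat \<Rightarrow> real" where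
  "pad_leaders nl d u i a = (if nl \<le> i then u $ ((i - nl) * d + a) else 0)"

lemma L_ff_quadratic_form:
  assumes d: "0 < d" and nl: "nl \<le> n" and u: "u \<in> carrier_vec (d * (n - nl))"
  shows "u \<bullet> (L_ff n nl d E g *\<^sub>v u)
       = (\<Sum>i<n. \<Sum>a<d. \<Sum>j<n. \<Sum>b<d.
            pad_leaders nl d u i a * laplacian_block d E g i j a b * pad_leaders nl d u j b)"
proof -
  let ?z = "pad_leaders nl d u" and ?L = "L_ff n nl d E g" and ?m = "n - nl"
  have idx: "i * d + a < d * ?m" if "i < ?m" "a < d" for i a
  proof -
    have "i * d + a < (i + 1) * d" using that by simp
    also have "\<dots> \<le> ?m * d" using that by (intro mult_right_mono) auto
    finally show ?thesis by (simp add: mult.commute)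
  qed
  have "u \<bullet> (?L *\<^sub>v u) = (\<Sum>r<?m * d. \<Sum>s<?m * d. u $ r * ?L $$ (r, s) * u $ s)"
    using u by (simp add: quadratic_form_sum[OF L_ff_carrier] mult.commute)
  also have "\<dots> = (\<Sum>i<?m. \<Sum>a<d. \<Sum>j<?m. \<Sum>b<d.
      u $ (i * d + a) * ?L $$ (i * d + a, j * d + b) * u $ (j * d + b))"
    by (simp add: sum_lessThan_mult_blocks)
  also have "\<dots> = (\<Sum>i<?m. \<Sum>a<d. \<Sum>j<?m. \<Sum>b<d.
      ?z (i + nl) a * laplacian_block d E g (i + nl) (j + nl) a b * ?z (j + nl) b)"
    using d nl by (intro sum.cong refl) (simp add: L_ff_index idx pad_leaders_def)
  also have "\<dots> = (\<Sum>i<n. \<Sum>a<d. \<Sum>j<n. \<Sum>b<d.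
      ?z i a * laplacian_block d E g i j a b * ?z j b)"
    using nl by (simp add: sum_lessThan_drop_zeros[of nl _ n] pad_leaders_def)
  finally show ?thesis .
qed

lemma L_ff_pos_def:
  fixes p :: "nat \<Rightarrow> nat \<Rightarrow> real"
  assumes d: "0 < d" and G: "undirected_graph n E" and nl: "2 \<le> nl" "nl \<le> n"
    and nc: "no_coinciding n d p"
    and gE: "\<And>i j c. (i, j) \<in> E \<Longrightarrow> c < d \<Longrightarrow> g i j c = bearing d p i j c"
    and rigid: "inf_bearing_rigid n d E p"
    and u: "u \<in> carrier_vec (d * (n - nl))" "u \<noteq> 0\<^sub>v (d * (n - nl))"
  shows "u \<bullet> (L_ff n nl d E g *\<^sub>v u) > 0"
proof (rule ccontr)
  assume not_pos: "\<not> ?thesis"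
  let ?z = "pad_leaders nl d u"
  define W where "W i k = (\<Sum>a<d. \<Sum>b<d. (?z i a - ?z k a) * proj d (g i k) a b * (?z i b - ?z k b))"
    for i k
  have anti: "\<And>i k c. (i, k) \<in> E \<Longrightarrow> c < d \<Longrightarrow> g k i c = - g i k c"
    using G gE by (rule edge_bearings_antisymmetric)
  have "2 * (u \<bullet> (L_ff n nl d E g *\<^sub>v u)) = (\<Sum>(i, k)\<in>E. W i k)"
    unfolding L_ff_quadratic_form[OF d nl(2) u(1)] W_def by (rule laplacian_quadratic_form[OF G anti])
  moreover have W_nonneg: "W i k \<ge> 0" if "(i, k) \<in> E" for i k
    unfolding W_def using sqnorm_edge_bearing[OF G nc gE that] by (intro proj_quadratic_form_nonneg) simp
  ultimately have "(\<Sum>(i, k)\<in>E. W i k) = 0"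
    using not_pos by (intro antisym) (auto intro: sum_nonneg)
  moreover have "finite E"
    using G unfolding undirected_graph_def by (auto intro: finite_subset)
  ultimately have W0: "W i k = 0" if "(i, k) \<in> E" for i k
    using sum_nonneg_eq_0_iff[of E "\<lambda>(i, k). W i k"] W_nonneg that by auto
  have zero: "?z i c = 0" if "i < n" "c < d" for i c
    using zero_edge_energy_imp_zero[OF G nc gE rigid nl W0[unfolded W_def]] that
    by (simp add: pad_leaders_def)
  then have "u $ r = 0" if "r < d * (n - nl)" for r
  proof -
    have "r div d < n - nl" using that by (simp add: less_mult_imp_div_less mult.commute)
    then have "?z (r div d + nl) (r mod d) = 0" using zero d by simp
    then show ?thesis unfolding pad_leaders_def by simp
  qed
  then have "u = 0\<^sub>v (d * (n - nl))" using u(1) by (intro eq_vecI) auto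
  with u(2) show False ..
qed

lemma hermitian_form_of_real_symmetric:
  fixes L :: "real mat" and x :: "complex vec"
  assumes L: "L \<in> carrier_mat m m" and sym: "transpose_mat L = L" and x: "x \<in> carrier_vec m"
  shows "conjugate x \<bullet> (map_mat complex_of_real L *\<^sub>v x)
       = of_real (map_vec Re x \<bullet> (L *\<^sub>v map_vec Re x) + map_vec Im x \<bullet> (L *\<^sub>v map_vec Im x))"
proof -
  define a where "a r = Re (x $ r)" for r
  define b where "b r = Im (x $ r)" for r
  have Lsym: "L $$ (r, s) = L $$ (s, r)" if "r < m" "s < m" for r s
    using arg_cong[OF sym, of "\<lambda>M. M $$ (s, r)"] that L by auto
  have lhs: "conjugate x \<bullet> (map_mat complex_of_real L *\<^sub>v x)
      = (\<Sum>r<m. \<Sum>s<m. cnj (x $ r) * of_real (L $$ (r, s)) * x $ s)"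
    using L x by (simp add: quadratic_form_sum[of _ m])
  have rhs: "map_vec Re x \<bullet> (L *\<^sub>v map_vec Re x) + map_vec Im x \<bullet> (L *\<^sub>v map_vec Im x)
      = (\<Sum>r<m. \<Sum>s<m. L $$ (r, s) * (a r * a s + b r * b s))"
    using L x by (simp add: quadratic_form_sum[of _ m] a_def b_def sum.distrib[symmetric] algebra_simps)
  have "(\<Sum>r<m. \<Sum>s<m. L $$ (r, s) * (a r * b s)) = (\<Sum>s<m. \<Sum>r<m. L $$ (r, s) * (a r * b s))"
    by (rule sum.swap)
  also have "\<dots> = (\<Sum>s<m. \<Sum>r<m. L $$ (s, r) * (b s * a r))"
    by (intro sum.cong refl) (simp add: Lsym mult.commute)
  finally have im0: "(\<Sum>r<m. \<Sum>s<m. L $$ (r, s) * (a r * b s - b r * a s)) = 0"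
    by (simp add: right_diff_distrib sum_subtractf)
  show ?thesis
    unfolding lhs rhs using im0
    by (simp add: complex_eq_iff a_def b_def algebra_simps)
qed

lemma hermitian_form_pos:
  fixes L :: "real mat" and x :: "complex vec"
  assumes L: "L \<in> carrier_mat m m" and sym: "transpose_mat L = L"
    and pd: "\<And>v. v \<in> carrier_vec m \<Longrightarrow> v \<noteq> 0\<^sub>v m \<Longrightarrow> v \<bullet> (L *\<^sub>v v) > 0"
    and x: "x \<in> carrier_vec m" "x \<noteq> 0\<^sub>v m"
  shows "\<exists>q > 0. conjugate x \<bullet> (map_mat complex_of_real L *\<^sub>v x) = of_real q"
proof -
  let ?a = "map_vec Re x" and ?b = "map_vec Im x"
  have nonneg: "v \<bullet> (L *\<^sub>v v) \<ge> 0" if "v \<in> carrier_vec m" for v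
    using pd[OF that] L by (cases "v = 0\<^sub>v m") (auto simp: less_imp_le)
  have "?a \<noteq> 0\<^sub>v m \<or> ?b \<noteq> 0\<^sub>v m"
    using x by (auto simp: vec_eq_iff complex_eq_iff)
  moreover have ab: "?a \<in> carrier_vec m" "?b \<in> carrier_vec m" using x by auto
  ultimately have "?a \<bullet> (L *\<^sub>v ?a) + ?b \<bullet> (L *\<^sub>v ?b) > 0"
    by (metis add_pos_nonneg add_nonneg_pos pd nonneg)
  then show ?thesis
    using hermitian_form_of_real_symmetric[OF L sym x(1)] by blast
qed

lemma conjugate_square_real_pos:
  fixes x :: "complex vec"
  assumes "x \<in> carrier_vec m" and "x \<noteq> 0\<^sub>v m"
  shows "\<exists>r > 0. conjugate x \<bullet> x = of_real r"
proof -
  have "x \<bullet>c x > 0" using assms by simp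
  moreover have "conjugate x \<bullet> x = x \<bullet>c x"
    using assms(1) by (simp add: conjugate_vec_sprod_comm[of _ m])
  ultimately show ?thesis
    by (intro exI[of _ "Re (x \<bullet>c x)"]) (auto simp: less_complex_def complex_eq_iff)
qed

lemma quadratic_roots_left_half_plane:
  fixes z :: complex and a b c :: real
  assumes a: "a > 0" and b: "b > 0" and c: "c > 0"
    and root: "of_real a * z\<^sup>2 + of_real b * z + of_real c = 0"
  shows "Re z < 0"
proof (rule ccontr)
  assume "\<not> Re z < 0"
  then have x: "Re z \<ge> 0" by simp
  have re: "a * (Re z * Re z - Im z * Im z) + b * Re z + c = 0"
    using arg_cong[OF root, of Re] by (simp add: power2_eq_square)
  have im: "Im z * (2 * a * Re z + b) = 0"
    using arg_cong[OF root, of Im] by (simp add: power2_eq_square algebra_simps)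
  have "2 * a * Re z + b > 0" using a b x by (simp add: add_nonneg_pos)
  with im have "Im z = 0" by simp
  with re have "a * (Re z * Re z) + b * Re z + c = 0" by simp
  moreover have "a * (Re z * Re z) \<ge> 0" "b * Re z \<ge> 0" using a b x by simp_all
  ultimately show False using c by linarith
qed

lemma smult_append_vec:
  "k \<cdot>\<^sub>v (x @\<^sub>v y) = (k \<cdot>\<^sub>v x) @\<^sub>v (k \<cdot>\<^sub>v y)"
  by (rule eq_vecI) auto

lemma smult_mat_mult_mat_vec:
  fixes A :: "'a :: comm_ring mat"
  assumes "v \<in> carrier_vec (dim_col A)"
  shows "(k \<cdot>\<^sub>m A) *\<^sub>v v = k \<cdot>\<^sub>v (A *\<^sub>v v)"
  using assms by (intro eq_vecI) (auto simp: scalar_prod_def sum_distrib_left mult.assoc)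

lemma PI_block_eigenvector:
  fixes L :: "real mat" and kP kI :: real
  assumes L: "L \<in> carrier_mat m m" and kI: "kI \<noteq> 0"
    and ev: "eigenvector (map_mat complex_of_real
      (four_block_mat ((- kP) \<cdot>\<^sub>m L) ((- kI) \<cdot>\<^sub>m 1\<^sub>m m) L (0\<^sub>m m m))) w z"
  obtains x y where "x \<in> carrier_vec m" and "y \<in> carrier_vec m" and "x \<noteq> 0\<^sub>v m"
    and "of_real (- kP) \<cdot>\<^sub>v (map_mat complex_of_real L *\<^sub>v x) + of_real (- kI) \<cdot>\<^sub>v y = z \<cdot>\<^sub>v x"
    and "map_mat complex_of_real L *\<^sub>v x = z \<cdot>\<^sub>v y"
proof -
  let ?L = "map_mat complex_of_real L"
  let ?M = "map_mat complex_of_real (four_block_mat ((- kP) \<cdot>\<^sub>m L) ((- kI) \<cdot>\<^sub>m 1\<^sub>m m) L (0\<^sub>m m m))"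
  have w: "w \<in> carrier_vec (m + m)" "w \<noteq> 0\<^sub>v (m + m)" and Mw: "?M *\<^sub>v w = z \<cdot>\<^sub>v w"
    using ev L unfolding eigenvector_def by auto
  define x where "x = vec_first w m"
  define y where "y = vec_last w m"
  have x: "x \<in> carrier_vec m" and y: "y \<in> carrier_vec m" and xy: "w = x @\<^sub>v y"
    using w(1) by (simp_all add: x_def y_def)
  have Lc: "?L \<in> carrier_mat m m" using L by simp
  have M: "?M = four_block_mat (of_real (- kP) \<cdot>\<^sub>m ?L) (of_real (- kI) \<cdot>\<^sub>m 1\<^sub>m m) ?L (0\<^sub>m m m)"
    using L by (subst map_four_block_mat) (auto intro!: eq_matI)
  have "?M *\<^sub>v w = (of_real (- kP) \<cdot>\<^sub>v (?L *\<^sub>v x) + of_real (- kI) \<cdot>\<^sub>v y) @\<^sub>v (?L *\<^sub>v x)"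
    unfolding M xy using L x y
    by (subst four_block_mat_mult_vec[OF _ _ Lc _ x y]) (auto simp: smult_mat_mult_mat_vec)
  with Mw have "(of_real (- kP) \<cdot>\<^sub>v (?L *\<^sub>v x) + of_real (- kI) \<cdot>\<^sub>v y) @\<^sub>v (?L *\<^sub>v x)
      = (z \<cdot>\<^sub>v x) @\<^sub>v (z \<cdot>\<^sub>v y)"
    unfolding xy smult_append_vec by simp
  then have eq1: "of_real (- kP) \<cdot>\<^sub>v (?L *\<^sub>v x) + of_real (- kI) \<cdot>\<^sub>v y = z \<cdot>\<^sub>v x"
    and eq2: "?L *\<^sub>v x = z \<cdot>\<^sub>v y"
    using Lc x y by (subst (asm) append_vec_eq[of _ m]; auto)+
  have x0: "x \<noteq> 0\<^sub>v m"
  proof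
    assume "x = 0\<^sub>v m"
    then have "y $ i = 0" if "i < m" for i
      using arg_cong[OF eq1, of "\<lambda>v. v $ i"] that Lc y kI by simp
    with y have "y = 0\<^sub>v m" by (auto simp: vec_eq_iff)
    with \<open>x = 0\<^sub>v m\<close> xy w(2) show False by auto
  qed
  from x y x0 eq1 eq2 show thesis by (rule that)
qed

lemma hurwitz_PI_block:
  fixes L :: "real mat" and kP kI :: real
  assumes L: "L \<in> carrier_mat m m" and sym: "transpose_mat L = L"
    and pd: "\<And>v. v \<in> carrier_vec m \<Longrightarrow> v \<noteq> 0\<^sub>v m \<Longrightarrow> v \<bullet> (L *\<^sub>v v) > 0"
    and kP: "kP > 0" and kI: "kI > 0"
  shows "hurwitz (four_block_mat ((- kP) \<cdot>\<^sub>m L) ((- kI) \<cdot>\<^sub>m 1\<^sub>m m) L (0\<^sub>m m m))"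
  unfolding hurwitz_def eigenvalue_def
proof (intro allI impI, elim exE)
  let ?L = "map_mat complex_of_real L"
  fix z w
  assume "eigenvector (map_mat complex_of_real
      (four_block_mat ((- kP) \<cdot>\<^sub>m L) ((- kI) \<cdot>\<^sub>m 1\<^sub>m m) L (0\<^sub>m m m))) w z"
  then obtain x y where x: "x \<in> carrier_vec m" "x \<noteq> 0\<^sub>v m" and y: "y \<in> carrier_vec m"
    and eq1: "of_real (- kP) \<cdot>\<^sub>v (?L *\<^sub>v x) + of_real (- kI) \<cdot>\<^sub>v y = z \<cdot>\<^sub>v x"
    and eq2: "?L *\<^sub>v x = z \<cdot>\<^sub>v y"
    using PI_block_eigenvector[OF L] kI by (metis less_irrefl)
  obtain q where q: "q > 0" "conjugate x \<bullet> (?L *\<^sub>v x) = of_real q"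
    using hermitian_form_pos[OF L sym pd x] by blast
  obtain r where r: "r > 0" "conjugate x \<bullet> x = of_real r"
    using conjugate_square_real_pos[OF x] by blast
  have cx: "conjugate x \<in> carrier_vec m" using x by simp
  define p where "p = conjugate x \<bullet> y"
  have zr: "z * of_real r = - (of_real kP * of_real q) - of_real kI * p"
    using arg_cong[OF eq1, of "\<lambda>v. conjugate x \<bullet> v"] cx L x y q(2) r(2)
    by (simp add: scalar_prod_add_distrib[of _ m] p_def)
  have qp: "of_real q = z * p"
    using arg_cong[OF eq2, of "\<lambda>v. conjugate x \<bullet> v"] cx y q(2) by (simp add: p_def)
  have "of_real r * z\<^sup>2 + of_real (kP * q) * z + of_real (kI * q)
      = z * (z * of_real r + of_real kP * of_real q + of_real kI * p)"
    by (simp add: qp power2_eq_square algebra_simps)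
  also have "\<dots> = 0" by (simp add: zr)
  finally show "Re z < 0"
    by (rule quadratic_roots_left_half_plane[rotated 3]) (use r(1) q(1) kP kI in simp_all)
qed

theorem lemma3:
  fixes n d nl :: nat and E :: "(nat \<times> nat) set"
    and g :: "nat \<Rightarrow> nat \<Rightarrow> nat \<Rightarrow> real" and pstar :: "nat \<Rightarrow> nat \<Rightarrow> real"
    and kP kI :: real
  assumes "n \<ge> 2" and "d \<ge> 2"
    and "undirected_graph n E"
    and "2 \<le> nl" and "nl \<le> n"
    and "no_coinciding n d pstar"
    and "\<forall>(i,j)\<in>E. \<forall>c<d. g i j c = bearing d pstar i j c"
    and "inf_bearing_rigid n d E pstar"
    and "kP > 0" and "kI > 0"
  shows "hurwitz (four_block_mat
            ((- kP) \<cdot>\<^sub>m L_ff n nl d E g) ((- kI) \<cdot>\<^sub>m 1\<^sub>m (d*(n-nl)))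
            (L_ff n nl d E g) (0\<^sub>m (d*(n-nl)) (d*(n-nl))))"
proof (rule hurwitz_PI_block[OF L_ff_carrier])
  have d: "0 < d" using \<open>d \<ge> 2\<close> by simp
  have gE: "\<And>i j c. (i, j) \<in> E \<Longrightarrow> c < d \<Longrightarrow> g i j c = bearing d pstar i j c"
    using assms(7) by auto
  have sym: "\<And>i j. (i, j) \<in> E \<Longrightarrow> (j, i) \<in> E"
    using assms(3) unfolding undirected_graph_def by blast
  have anti: "\<And>i j c. (i, j) \<in> E \<Longrightarrow> c < d \<Longrightarrow> g j i c = - g i j c"
    using assms(3) gE by (rule edge_bearings_antisymmetric)
  show "transpose_mat (L_ff n nl d E g) = L_ff n nl d E g"
    by (rule L_ff_symmetric[OF d \<open>nl \<le> n\<close> sym anti])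
  show "v \<bullet> (L_ff n nl d E g *\<^sub>v v) > 0"
    if "v \<in> carrier_vec (d * (n - nl))" and "v \<noteq> 0\<^sub>v (d * (n - nl))" for v
    using L_ff_pos_def[OF d assms(3-6) gE assms(8) that] .
qed (use assms in auto)

end
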